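(* Let $q\in\mathbb C\setminus\{0\}$ not be a root of unity and let $B$ be braided $SL_q(2)$ with generators $u,x,y,z$, regarded as an ordinary algebra, and let $\mathbb C$ be a left $B$-module via $\varepsilon$. Writing elements of $B^3$ as row vectors, the sequence of left $B$-module maps $$0\to B\xrightarrow{\varphi_3}B^3\xrightarrow{\varphi_2}B^3\xrightarrow{\varphi_1}B\xrightarrow{\varphi_0}\mathbb C\to0,$$ $\varphi_0(f)=\varepsilon(f)$, $\varphi_1(f,g,h)=fx+gy+h(u-1)$, $\varphi_3(f)=(fy,\,-q^2fx,\,f(u-1))$, and $$\varphi_2(f,g,h)=(f,g,h)\begin{pmatrix}q^{-2}u&0&-x\\0&q^2u-1&-y\\-y&q^2x&(1-q^2)(u+1)\end{pmatrix},$$ is exact, i.e. a free resolution of $\mathbb C$.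
   Context: $B$ is the transmutation of $H=\mathbb C_q[SL(2)]$: the vector space $H$ with product $f*g=f_{(2)}g_{(2)}\mathbf r(S(f_{(1)})f_{(3)},S(g_{(1)}))$ (written as juxtaposition), where $H$ has generators $a,b,c,d$ with $ab=qba$, $ac=qca$, $bd=qdb$, $cd=qdc$, $bc=cb$, $ad-qbc=1$, $da-q^{-1}bc=1$, matrix coproduct, and $\mathbf r$ is the universal r-form determined multiplicatively by $\mathbf r(a,a)=\mathbf r(d,d)=q^{1/2}$, $\mathbf r(a,d)=\mathbf r(d,a)=q^{-1/2}$, $\mathbf r(c,b)=q^{-1/2}(q-q^{-1})$, other generator values $0$. $B$ is generated by $u=d$, $x=qb$, $y=qc$, $z=(qa-qd)/(q+q^{-1})$ with relations $ux=q^2xu$, $uy=q^{-2}yu$, $zu=uz$, $xy=u^2+(1+q^{-2})uz-1$, $yx=u^2+(1+q^2)uz-1$, $zx=xz+(1-q^2)xu$, $zy=yz+(1-q^{-2})yu$; counit $\varepsilon(u)=1$, $\varepsilon(x)=\varepsilon(y)=\varepsilon(z)=0$ (an algebra map). *)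

theory Defs
  imports Complex_Main "HOL-Library.Poly_Mapping"
begin

datatype gen = U | X | Y | Z

datatype word = Word "gen list"

instantiation word :: monoid_add
begin
definition zero_word :: word where "zero_word = Word []"
fun plus_word :: "word \<Rightarrow> word \<Rightarrow> word" where
  "plus_word (Word a) (Word b) = Word (a @ b)"
instance
proof
  fix a b c :: word
  show "a + b + c = a + (b + c)" by (cases a; cases b; cases c) simp
  show "0 + a = a" by (cases a) (simp add: zero_word_def)
  show "a + 0 = a" by (cases a) (simp add: zero_word_def)
qed
end

text \<open>The free associative unital complex algebra on u, x, y, z: finitely supported
  complex combinations of words, with convolution product (a ring_1).\<close>
type_synonym freealg = "word \<Rightarrow>\<^sub>0 complex"

definition sc :: "complex \<Rightarrow> freealg" where
  "sc c = Poly_Mapping.single 0 c"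

definition gen_el :: "gen \<Rightarrow> freealg" where
  "gen_el g = Poly_Mapping.single (Word [g]) 1"

abbreviation "gu \<equiv> gen_el U"
abbreviation "gx \<equiv> gen_el X"
abbreviation "gy \<equiv> gen_el Y"
abbreviation "gz \<equiv> gen_el Z"

definition bsl_rels :: "complex \<Rightarrow> freealg set" where
  "bsl_rels q = {
     gu * gx - sc (q^2) * gx * gu,
     gu * gy - sc (inverse (q^2)) * gy * gu,
     gz * gu - gu * gz,
     gx * gy - (gu * gu + sc (1 + inverse (q^2)) * gu * gz - 1),
     gy * gx - (gu * gu + sc (1 + q^2) * gu * gz - 1),
     gz * gx - (gx * gz + sc (1 - q^2) * gx * gu),
     gz * gy - (gy * gz + sc (1 - inverse (q^2)) * gy * gu) }"

inductive_set bsl_ideal :: "complex \<Rightarrow> freealg set" for q :: complex where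
  rel: "r \<in> bsl_rels q \<Longrightarrow> r \<in> bsl_ideal q"
| zero: "0 \<in> bsl_ideal q"
| add: "a \<in> bsl_ideal q \<Longrightarrow> b \<in> bsl_ideal q \<Longrightarrow> a + b \<in> bsl_ideal q"
| mult: "a \<in> bsl_ideal q \<Longrightarrow> l * a * r \<in> bsl_ideal q"

text \<open>B = freealg / bsl_ideal q.  Elements of B are represented by elements of freealg;
  two representatives are equal in B iff their difference lies in the ideal.\<close>

definition beq :: "complex \<Rightarrow> freealg \<Rightarrow> freealg \<Rightarrow> bool" where
  "beq q a b \<longleftrightarrow> a - b \<in> bsl_ideal q"

definition beq3 :: "complex \<Rightarrow> freealg \<times> freealg \<times> freealg \<Rightarrow> freealg \<times> freealg \<times> freealg \<Rightarrow> bool" where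
  "beq3 q v w \<longleftrightarrow> (case v of (a1, a2, a3) \<Rightarrow> case w of (b1, b2, b3) \<Rightarrow>
      beq q a1 b1 \<and> beq q a2 b2 \<and> beq q a3 b3)"

definition gen_eps :: "gen \<Rightarrow> complex" where
  "gen_eps g = (if g = U then 1 else 0)"

fun word_eps :: "word \<Rightarrow> complex" where
  "word_eps (Word ws) = prod_list (map gen_eps ws)"

definition eps :: "freealg \<Rightarrow> complex" where
  "eps f = (\<Sum>w\<in>Poly_Mapping.keys f. Poly_Mapping.lookup f w * word_eps w)"

definition phi1 :: "freealg \<times> freealg \<times> freealg \<Rightarrow> freealg" where
  "phi1 v = (case v of (f, g, h) \<Rightarrow> f * gx + g * gy + h * (gu - 1))"

text \<open>Row vector (f,g,h) times the matrix
  [[q^-2 u - 1, 0, -x], [0, q^2 u - 1, -y], [-y, q^2 x, (1-q^2)(u+1)]].\<close>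
definition phi2 :: "complex \<Rightarrow> freealg \<times> freealg \<times> freealg \<Rightarrow> freealg \<times> freealg \<times> freealg" where
  "phi2 q v = (case v of (f, g, h) \<Rightarrow>
     ( f * (sc (inverse (q^2)) * gu - 1) - h * gy,
       g * (sc (q^2) * gu - 1) + h * (sc (q^2) * gx),
       - (f * gx) - g * gy + h * (sc (1 - q^2) * (gu + 1))))"

definition phi3 :: "complex \<Rightarrow> freealg \<Rightarrow> freealg \<times> freealg \<times> freealg" where
  "phi3 q f = (f * gy, - (sc (q^2) * f * gx), f * (gu - 1))"

end

theory Submission
  imports Defs "HOL-Computational_Algebra.Polynomial" "HOL-Library.Function_Algebras"
begin

(* Write w = z + u; it is central in B. Every element of B is congruent to a sum of PBW monomials
   x^n p(u, w) and y^n p(u, w), and B acts faithfully on finitely supported sequences (p_n),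
   n in Z, of polynomials in u and w: u and z act diagonally, x raises and y lowers the degree.
   So the orbit map nf f = f . delta_0 identifies B with such sequences, and the congruence
   modulo the defining ideal becomes equality of normal forms. In normal form, right
   multiplication by x, y and u is an explicit shift composed with the substitution u -> q^(+-2) u;
   after a suitable twist the maps phi1, phi2, phi3 act degree by degree through small matrices
   over C[u, w], whose exactness is checked directly. The one divisibility step, by u - 1, is
   done by evaluating at u = 1 and needs q^2 <> -1. Exactness at B itself follows from
   f = eps f + a x + b y + c (u - 1) + d z, eliminating z with the relation for x y. *)

lemma poly_mapping_single_add_induct [case_names zero single_add]:
  fixes P :: "('a \<Rightarrow>\<^sub>0 'b::monoid_add) \<Rightarrow> bool"
  assumes "P 0" and "\<And>f a b. P f \<Longrightarrow> P (Poly_Mapping.single a b + f)"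
  shows "P f"
proof (induction f rule: Poly_Mapping.update_induct)
  case const
  then show ?case using assms(1) by simp
next
  case (update f a b)
  have "Poly_Mapping.update a b f = Poly_Mapping.single a b + f"
    using update(1)
    by (intro poly_mapping_eqI) (auto simp: lookup_update lookup_add lookup_single in_keys_iff
        when_def)
  then show ?case using assms(2) update by simp
qed

lemma sc_mult: "sc a * sc b = sc (a * b)"
  by (simp add: sc_def mult_single)

lemma sc_add: "sc a + sc b = sc (a + b)"
  by (simp add: sc_def single_add)

lemma sc_diff: "sc a - sc b = sc (a - b)"
  by (simp add: sc_def single_diff)

lemma sc_0 [simp]: "sc 0 = 0"
  by (simp add: sc_def)

lemma sc_1 [simp]: "sc 1 = 1"
  by (simp add: sc_def)

lemma sc_mult_sc: "sc a * (sc b * f) = sc (a * b) * f"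
  by (simp add: mult.assoc[symmetric] sc_mult)

lemma sc_commute: "sc c * f = f * sc c"
proof (induction f rule: poly_mapping_single_add_induct)
  case zero
  then show ?case by simp
next
  case (single_add f w d)
  have "sc c * Poly_Mapping.single w d = Poly_Mapping.single w d * sc c"
    by (simp add: sc_def mult_single mult.commute)
  then show ?case using single_add by (simp add: distrib_left distrib_right)
qed

lemma mult_sc_left_commute: "f * (sc c * g) = sc c * (f * g)"
  by (metis mult.assoc sc_commute)

lemma single_Word_Nil: "Poly_Mapping.single (Word []) c = sc c"
  by (simp add: sc_def zero_word_def)

lemma single_Word_Cons:
  "Poly_Mapping.single (Word (g # gs)) c = gen_el g * Poly_Mapping.single (Word gs) c"
  by (simp add: gen_el_def mult_single)

lemma bsl_ideal_mult_left: "a \<in> bsl_ideal q \<Longrightarrow> l * a \<in> bsl_ideal q"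
  using bsl_ideal.mult[of a q l 1] by simp

lemma bsl_ideal_mult_right: "a \<in> bsl_ideal q \<Longrightarrow> a * r \<in> bsl_ideal q"
  using bsl_ideal.mult[of a q 1 r] by simp

lemma bsl_ideal_uminus: "a \<in> bsl_ideal q \<Longrightarrow> - a \<in> bsl_ideal q"
  using bsl_ideal_mult_left[of a q "-1"] by simp

lemma bsl_ideal_diff: "a \<in> bsl_ideal q \<Longrightarrow> b \<in> bsl_ideal q \<Longrightarrow> a - b \<in> bsl_ideal q"
  unfolding diff_conv_add_uminus by (intro bsl_ideal.add bsl_ideal_uminus)

lemma beq_refl [simp]: "beq q a a"
  by (simp add: beq_def bsl_ideal.zero)

lemma beq_trans [trans]: "beq q a b \<Longrightarrow> beq q b c \<Longrightarrow> beq q a c"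
  unfolding beq_def using bsl_ideal.add by fastforce

lemma beq_add: "beq q a b \<Longrightarrow> beq q c d \<Longrightarrow> beq q (a + c) (b + d)"
  unfolding beq_def using bsl_ideal.add by (fastforce simp: algebra_simps)

lemma beq_diff: "beq q a b \<Longrightarrow> beq q c d \<Longrightarrow> beq q (a - c) (b - d)"
  unfolding beq_def using bsl_ideal_diff by (fastforce simp: algebra_simps)

lemma beq_mult_left: "beq q a b \<Longrightarrow> beq q (l * a) (l * b)"
  unfolding beq_def using bsl_ideal_mult_left by (fastforce simp: algebra_simps)

lemma beq_mult_right: "beq q a b \<Longrightarrow> beq q (a * r) (b * r)"
  unfolding beq_def using bsl_ideal_mult_right by (fastforce simp: algebra_simps)

lemma beq_relI: "r \<in> bsl_rels q \<Longrightarrow> r = a - b \<Longrightarrow> beq q a b"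
  by (simp add: beq_def bsl_ideal.rel)

section \<open>The counit and exactness at B\<close>

lemma eps_add: "eps (f + g) = eps f + eps g"
  unfolding eps_def by (rule setsum_keys_plus_distrib) (auto simp: distrib_right)

lemma eps_0 [simp]: "eps 0 = 0"
  by (simp add: eps_def)

lemma eps_single [simp]: "eps (Poly_Mapping.single w c) = c * word_eps w"
  by (cases "c = 0") (simp_all add: eps_def)

lemma eps_uminus: "eps (- f) = - eps f"
  using eps_add[of f "- f"] by (simp add: eq_neg_iff_add_eq_0 add.commute)

lemma eps_diff: "eps (f - g) = eps f - eps g"
  using eps_add[of f "- g"] eps_uminus[of g] by simp

lemma word_eps_plus: "word_eps (a + b) = word_eps a * word_eps b"
  by (cases a; cases b) simp

lemma eps_mult: "eps (f * g) = eps f * eps g"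
proof (induction f rule: poly_mapping_single_add_induct)
  case zero
  then show ?case by simp
next
  case (single_add f w c)
  have "eps (Poly_Mapping.single w c * g) = c * word_eps w * eps g"
  proof (induction g rule: poly_mapping_single_add_induct)
    case zero
    then show ?case by simp
  next
    case (single_add g w' c')
    then show ?case by (simp add: distrib_left eps_add mult_single word_eps_plus algebra_simps)
  qed
  then show ?case using single_add by (simp add: distrib_right eps_add algebra_simps)
qed

lemma eps_sc [simp]: "eps (sc c) = c"
  by (simp add: sc_def zero_word_def)

lemma eps_1 [simp]: "eps 1 = 1"
  using eps_sc[of 1] by simp

lemma eps_gen_el [simp]: "eps (gen_el g) = gen_eps g"
  by (simp add: gen_el_def)

lemma eps_bsl_ideal: "a \<in> bsl_ideal q \<Longrightarrow> eps a = 0"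
proof (induction rule: bsl_ideal.induct)
  case (rel r)
  then show ?case by (auto simp: bsl_rels_def eps_diff eps_add eps_mult gen_eps_def)
qed (simp_all add: eps_add eps_mult)

definition aug_left_ideal :: "freealg set" where
  "aug_left_ideal = {a * gx + b * gy + c * (gu - 1) + d * gz | a b c d. True}"

lemma zero_in_aug_left_ideal: "0 \<in> aug_left_ideal"
proof -
  have "(0::freealg) = 0 * gx + 0 * gy + 0 * (gu - 1) + 0 * gz" by simp
  then show ?thesis unfolding aug_left_ideal_def by blast
qed

lemma aug_left_ideal_add:
  assumes "f \<in> aug_left_ideal" and "g \<in> aug_left_ideal"
  shows "f + g \<in> aug_left_ideal"
proof -
  obtain a b c d a' b' c' d' where
    f: "f = a * gx + b * gy + c * (gu - 1) + d * gz"
    and g: "g = a' * gx + b' * gy + c' * (gu - 1) + d' * gz"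
    using assms unfolding aug_left_ideal_def by blast
  have "f + g = (a + a') * gx + (b + b') * gy + (c + c') * (gu - 1) + (d + d') * gz"
    unfolding f g by (simp add: algebra_simps)
  then show ?thesis unfolding aug_left_ideal_def by blast
qed

lemma aug_left_ideal_mult_left:
  assumes "f \<in> aug_left_ideal"
  shows "l * f \<in> aug_left_ideal"
proof -
  obtain a b c d where f: "f = a * gx + b * gy + c * (gu - 1) + d * gz"
    using assms unfolding aug_left_ideal_def by blast
  have "l * f = (l * a) * gx + (l * b) * gy + (l * c) * (gu - 1) + (l * d) * gz"
    unfolding f by (simp add: algebra_simps)
  then show ?thesis unfolding aug_left_ideal_def by blast
qed

lemma gen_el_minus_eps_in_aug_left_ideal: "gen_el g - sc (gen_eps g) \<in> aug_left_ideal"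
proof -
  have "gen_el g - sc (gen_eps g) =
      (if g = X then 1 else 0) * gx + (if g = Y then 1 else 0) * gy
      + (if g = U then 1 else 0) * (gu - 1) + (if g = Z then 1 else 0) * gz"
    by (cases g) (simp_all add: gen_eps_def)
  then show ?thesis unfolding aug_left_ideal_def by blast
qed

lemma minus_sc_eps_in_aug_left_ideal: "f - sc (eps f) \<in> aug_left_ideal"
proof (induction f rule: poly_mapping_single_add_induct)
  case zero
  then show ?case by (simp add: zero_in_aug_left_ideal)
next
  case (single_add f w c)
  have "Poly_Mapping.single (Word gs) c - sc (c * word_eps (Word gs)) \<in> aug_left_ideal" for gs c
  proof (induction gs arbitrary: c)
    case Nil
    then show ?case by (simp add: single_Word_Nil zero_in_aug_left_ideal)
  next
    case (Cons g gs)
    let ?e = "c * word_eps (Word gs)"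
    have "Poly_Mapping.single (Word (g # gs)) c - sc (c * word_eps (Word (g # gs)))
        = gen_el g * (Poly_Mapping.single (Word gs) c - sc ?e)
          + sc ?e * (gen_el g - sc (gen_eps g))"
      using sc_commute[of ?e "gen_el g"]
      by (simp add: single_Word_Cons right_diff_distrib sc_mult mult_ac)
    then show ?case
      using Cons gen_el_minus_eps_in_aug_left_ideal
      by (simp add: aug_left_ideal_add aug_left_ideal_mult_left)
  qed
  then have "Poly_Mapping.single w c - sc (eps (Poly_Mapping.single w c)) \<in> aug_left_ideal"
    by (cases w) simp
  moreover have "Poly_Mapping.single w c + f - sc (eps (Poly_Mapping.single w c + f))
      = (Poly_Mapping.single w c - sc (eps (Poly_Mapping.single w c))) + (f - sc (eps f))"
    by (simp add: eps_add flip: sc_add)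
  ultimately show ?case using single_add.IH by (metis aug_left_ideal_add)
qed

locale braided_sl2 =
  fixes q :: complex
  assumes q_nonzero: "q \<noteq> 0"
    and one_plus_q_square_nonzero: "1 + q^2 \<noteq> 0"
begin

lemma one_plus_inverse_q_square_nonzero: "1 + inverse (q^2) \<noteq> 0"
proof -
  have "1 + inverse (q^2) = (1 + q^2) / q^2"
    using q_nonzero by (simp add: field_simps)
  then show ?thesis
    using q_nonzero one_plus_q_square_nonzero by simp
qed

lemma beq_z_xy:
  defines "k \<equiv> inverse (1 + inverse (q^2))"
  shows "beq q gz (sc k * gx * gy - (sc k * (gu + 1) + gz) * (gu - 1))"
proof -
  have k1: "k * (1 + inverse (q^2)) = 1"
    using one_plus_inverse_q_square_nonzero by (simp add: k_def)
  then have k2: "k + k * inverse (q^2) = 1"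
    by (simp add: algebra_simps)
  let ?r3 = "gz * gu - gu * gz"
  let ?r4 = "gx * gy - (gu * gu + sc (1 + inverse (q^2)) * gu * gz - 1)"
  have "?r3 \<in> bsl_ideal q" and "?r4 \<in> bsl_ideal q"
    by (simp_all add: bsl_ideal.rel bsl_rels_def)
  then have "?r3 - sc k * ?r4 \<in> bsl_ideal q"
    by (blast intro: bsl_ideal_diff bsl_ideal_mult_left)
  moreover have "gz - (sc k * gx * gy - (sc k * (gu + 1) + gz) * (gu - 1)) = ?r3 - sc k * ?r4"
    by (simp add: algebra_simps sc_mult_sc k1 k2)
  ultimately show ?thesis by (simp add: beq_def)
qed

lemma eps_eq_0_iff_beq_phi1: "eps f = 0 \<longleftrightarrow> (\<exists>v. beq q f (phi1 v))"
proof
  assume "eps f = 0"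
  then obtain a b c d where f: "f = a * gx + b * gy + c * (gu - 1) + d * gz"
    using minus_sc_eps_in_aug_left_ideal[of f] unfolding aug_left_ideal_def by auto
  define k where "k = inverse (1 + inverse (q^2))"
  have "beq q f (a * gx + b * gy + c * (gu - 1)
      + d * (sc k * gx * gy - (sc k * (gu + 1) + gz) * (gu - 1)))"
    unfolding f k_def by (intro beq_add beq_refl beq_mult_left beq_z_xy)
  also have "\<dots> = phi1 (a, b + d * sc k * gx, c - d * (sc k * (gu + 1) + gz))"
    by (simp add: phi1_def algebra_simps)
  finally show "\<exists>v. beq q f (phi1 v)" by blast
next
  assume "\<exists>v. beq q f (phi1 v)"
  then obtain v where "f - phi1 v \<in> bsl_ideal q"
    unfolding beq_def by blast
  then have "eps (f - phi1 v) = 0"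
    by (rule eps_bsl_ideal)
  moreover have "eps (phi1 v) = 0"
    by (cases v) (simp add: phi1_def eps_add eps_diff eps_mult gen_eps_def)
  ultimately show "eps f = 0"
    by (simp add: eps_diff)
qed

end

type_synonym poly2 = "complex poly poly"
type_synonym gseq = "int \<Rightarrow> poly2"

definition cst :: "complex \<Rightarrow> poly2" where "cst c = [:[:c:]:]"
definition var_u :: poly2 where "var_u = [:0, 1:]"
definition var_w :: poly2 where "var_w = [:[:0, 1:]:]"

lemma cst_mult: "cst (a * b) = cst a * cst b"
  by (simp add: cst_def)

lemma cst_add: "cst (a + b) = cst a + cst b"
  by (simp add: cst_def)

lemma cst_diff: "cst (a - b) = cst a - cst b"
  by (simp add: cst_def)

lemma cst_uminus: "cst (- a) = - cst a"
  by (simp add: cst_def)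

lemma cst_0 [simp]: "cst 0 = 0"
  by (simp add: cst_def)

lemma cst_1 [simp]: "cst 1 = 1"
  by (simp add: cst_def one_pCons)

lemma cst_power: "cst (a ^ k) = cst a ^ k"
  by (induction k) (simp_all add: cst_mult)

lemmas cst_simps = cst_mult cst_add cst_diff cst_uminus cst_power

lemmas fun_ops = plus_fun_apply zero_fun_apply minus_apply uminus_apply
declare fun_ops [simp del]

lemma sum_fun_apply: "(sum F S) n = (\<Sum>x\<in>S. F x n)"
  by (induction S rule: infinite_finite_induct) (auto simp: fun_ops)

definition cscale :: "complex \<Rightarrow> gseq \<Rightarrow> gseq" where
  "cscale c v = (\<lambda>n. cst c * v n)"

lemma cscale_apply: "cscale c v n = cst c * v n"
  by (simp add: cscale_def)

lemma cscale_add: "cscale c (v + w) = cscale c v + cscale c w"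
  by (simp add: fun_eq_iff fun_ops algebra_simps cscale_apply)

lemma cscale_add_left: "cscale (c + d) v = cscale c v + cscale d v"
  by (simp add: fun_eq_iff fun_ops algebra_simps cst_add cscale_apply)

lemma cscale_0_left [simp]: "cscale 0 v = 0"
  by (simp add: fun_eq_iff fun_ops cscale_apply)

lemma cscale_0_right [simp]: "cscale c 0 = 0"
  by (simp add: fun_eq_iff fun_ops cscale_apply)

lemma cscale_cscale: "cscale c (cscale d v) = cscale (c * d) v"
  by (simp add: fun_eq_iff fun_ops cst_mult cscale_apply)

lemma cscale_sum: "cscale c (sum F S) = (\<Sum>x\<in>S. cscale c (F x))"
  by (simp add: fun_eq_iff fun_ops sum_fun_apply sum_distrib_left cscale_apply)

definition clinear :: "(gseq \<Rightarrow> gseq) \<Rightarrow> bool" where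
  "clinear T \<longleftrightarrow> (\<forall>v w. T (v + w) = T v + T w) \<and> (\<forall>c v. T (cscale c v) = cscale c (T v))"

lemma clinear_add: "clinear T \<Longrightarrow> T (v + w) = T v + T w"
  by (simp add: clinear_def)

lemma clinear_cscale: "clinear T \<Longrightarrow> T (cscale c v) = cscale c (T v)"
  by (simp add: clinear_def)

lemma clinear_0: "clinear T \<Longrightarrow> T 0 = 0"
  using clinear_add[of T 0 0] by simp

lemma clinear_sum: "clinear T \<Longrightarrow> T (sum F S) = (\<Sum>x\<in>S. T (F x))"
  by (induction S rule: infinite_finite_induct) (auto simp: clinear_0 clinear_add)

lemma clinear_comp: "clinear T \<Longrightarrow> clinear T' \<Longrightarrow> clinear (T \<circ> T')"
  by (simp add: clinear_def)

definition gsingle :: "int \<Rightarrow> poly2 \<Rightarrow> gseq" where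
  "gsingle n p = (\<lambda>k. if k = n then p else 0)"

lemma gsingle_add: "gsingle n p + gsingle n p' = gsingle n (p + p')"
  by (simp add: gsingle_def fun_eq_iff fun_ops)

lemma cscale_gsingle: "cscale c (gsingle n p) = gsingle n (cst c * p)"
  by (simp add: gsingle_def fun_eq_iff cscale_apply)

lemma gsingle_0 [simp]: "gsingle n 0 = 0"
  by (simp add: gsingle_def fun_eq_iff fun_ops)

lemma sum_gsingle:
  assumes "finite T" and "\<forall>n. n \<notin> T \<longrightarrow> m n = 0"
  shows "(\<Sum>n\<in>T. gsingle n (m n)) = m"
proof
  fix k
  have "(\<Sum>n\<in>T. gsingle n (m n)) k = (\<Sum>n\<in>T. if k = n then m n else 0)"
    by (simp add: sum_fun_apply gsingle_def)
  also have "\<dots> = m k"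
    using assms by (auto simp: sum.delta)
  finally show "(\<Sum>n\<in>T. gsingle n (m n)) k = m k" .
qed

definition fin_supp :: "gseq \<Rightarrow> bool" where
  "fin_supp v \<longleftrightarrow> finite {n. v n \<noteq> 0}"

lemma finite_int_shift:
  assumes "finite {n::int. P n}"
  shows "finite {n. P (n + d)}"
proof -
  have "{n. P (n + d)} = (\<lambda>m. m - d) ` {n. P n}"
    by (auto intro: image_eqI[of _ _ "_ + d"])
  then show ?thesis
    using assms by simp
qed

locale linear_gen_action =
  fixes T :: "gen \<Rightarrow> gseq \<Rightarrow> gseq"
  assumes clinear_T: "clinear (T g)"
begin

primrec word_act :: "word \<Rightarrow> gseq \<Rightarrow> gseq" where
  "word_act (Word gs) = foldr T gs"

lemma clinear_word_act: "clinear (word_act w)"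
proof (cases w)
  case (Word gs)
  show ?thesis unfolding Word
  proof (induction gs)
    case Nil
    then show ?case by (simp add: clinear_def)
  next
    case (Cons g gs)
    then show ?case using clinear_comp[OF clinear_T Cons] by (simp add: comp_def)
  qed
qed

lemma word_act_plus: "word_act (a + b) = word_act a \<circ> word_act b"
  by (cases a; cases b) (simp add: fun_eq_iff)

definition act :: "freealg \<Rightarrow> gseq \<Rightarrow> gseq" where
  "act f v = (\<Sum>w\<in>Poly_Mapping.keys f. cscale (Poly_Mapping.lookup f w) (word_act w v))"

lemma act_add: "act (f + g) v = act f v + act g v"
  unfolding act_def by (rule setsum_keys_plus_distrib) (auto simp: cscale_add_left)

lemma act_0 [simp]: "act 0 v = 0"
  by (simp add: act_def)

lemma act_single: "act (Poly_Mapping.single w c) v = cscale c (word_act w v)"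
  by (cases "c = 0") (simp_all add: act_def)

lemma clinear_act: "clinear (act f)"
  unfolding clinear_def act_def
  by (simp add: clinear_add[OF clinear_word_act] clinear_cscale[OF clinear_word_act]
      cscale_add sum.distrib cscale_sum cscale_cscale mult.commute)

lemma act_mult: "act (f * g) v = act f (act g v)"
proof (induction f rule: poly_mapping_single_add_induct)
  case zero
  then show ?case by simp
next
  case (single_add f w c)
  have "act (Poly_Mapping.single w c * g) v = act (Poly_Mapping.single w c) (act g v)"
  proof (induction g rule: poly_mapping_single_add_induct)
    case zero
    then show ?case
      by (simp add: act_single clinear_0[OF clinear_word_act])
  next
    case (single_add g w' c')
    then show ?case
      by (simp add: distrib_left act_add mult_single act_single word_act_plus
          clinear_add[OF clinear_word_act] clinear_cscale[OF clinear_word_act] cscale_add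
              cscale_cscale)
  qed
  then show ?case using single_add by (simp add: distrib_right act_add)
qed

lemma act_uminus: "act (- f) v = - act f v"
  using act_add[of f "- f" v] by (simp add: eq_neg_iff_add_eq_0 add.commute)

lemma act_diff: "act (f - g) v = act f v - act g v"
  using act_add[of f "- g" v] act_uminus[of g v] by simp

lemma act_sc: "act (sc c) v = cscale c v"
  by (simp add: sc_def act_single zero_word_def)

lemma act_1: "act 1 v = v"
  using act_sc[of 1 v] by (simp add: fun_eq_iff cscale_apply)

lemma act_gen_el: "act (gen_el g) v = T g v"
  by (simp add: gen_el_def act_single fun_eq_iff cscale_apply)

lemma act_commute:
  assumes "\<And>g v. T g (R v) = R (T g v)" and "clinear R"
  shows "act f (R v) = R (act f v)"
proof -
  have "word_act (Word gs) (R v) = R (word_act (Word gs) v)" for gs v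
    by (induction gs arbitrary: v) (simp_all add: assms(1))
  then have "word_act w (R v) = R (word_act w v)" for w v
    by (cases w) auto
  then show ?thesis
    unfolding act_def by (simp add: clinear_sum[OF assms(2)] clinear_cscale[OF assms(2)])
qed

end

section \<open>A faithful representation\<close>

context braided_sl2
begin

definition qpow :: "int \<Rightarrow> complex" where
  "qpow n = (q^2) powi n"

lemma qpow_0 [simp]: "qpow 0 = 1"
  by (simp add: qpow_def)

lemma qpow_add_1: "qpow (n + 1) = q^2 * qpow n"
  using q_nonzero by (simp add: qpow_def power_int_add_1')

lemma qpow_diff_1: "qpow (n - 1) = qpow n * inverse (q^2)"
  using qpow_add_1[of "n - 1"] q_nonzero by (simp add: field_simps)

lemma cst_inverse_q_square:
  "cst (inverse (q^2)) * cst q ^ 2 = 1" "cst q ^ 2 * cst (inverse (q^2)) = 1"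
  using q_nonzero by (simp_all flip: cst_power cst_mult)

(* xy acts in degree n as xy_coeff n; x_coeff and y_coeff split this factor so that the
   PBW monomials x^k and y^k send delta_0 to delta_k and delta_(-k). *)
definition xy_coeff :: "int \<Rightarrow> poly2" where
  "xy_coeff n = - cst (inverse (q^2) * qpow n ^ 2) * var_u^2
     + cst ((1 + inverse (q^2)) * qpow n) * var_u * var_w - 1"

definition x_coeff :: "int \<Rightarrow> poly2" where
  "x_coeff n = (if 1 \<le> n then 1 else xy_coeff n)"

definition y_coeff :: "int \<Rightarrow> poly2" where
  "y_coeff n = (if n \<le> -1 then 1 else xy_coeff (n + 1))"

definition gen_act :: "gen \<Rightarrow> gseq \<Rightarrow> gseq" where
  "gen_act g v = (case g of
     U \<Rightarrow> (\<lambda>n. cst (qpow n) * var_u * v n)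
   | Z \<Rightarrow> (\<lambda>n. (var_w - cst (qpow n) * var_u) * v n)
   | X \<Rightarrow> (\<lambda>n. x_coeff n * v (n - 1))
   | Y \<Rightarrow> (\<lambda>n. y_coeff n * v (n + 1)))"

lemma gen_act_apply:
  "gen_act U v n = cst (qpow n) * var_u * v n"
  "gen_act Z v n = (var_w - cst (qpow n) * var_u) * v n"
  "gen_act X v n = x_coeff n * v (n - 1)"
  "gen_act Y v n = y_coeff n * v (n + 1)"
  by (simp_all add: gen_act_def)

lemma clinear_gen_act: "clinear (gen_act g)"
  by (cases g) (simp_all add: clinear_def gen_act_def fun_eq_iff fun_ops algebra_simps cscale_apply)

sublocale linear_gen_action gen_act
  by unfold_locales (rule clinear_gen_act)

lemma act_bsl_rels: "\<forall>r\<in>bsl_rels q. act r v = 0"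
  using cst_inverse_q_square unfolding bsl_rels_def
  apply (simp add: fun_eq_iff fun_ops act_diff act_add act_mult act_gen_el act_sc act_1 cscale_apply
      gen_act_apply qpow_diff_1 qpow_add_1 x_coeff_def y_coeff_def xy_coeff_def cst_simps)
  apply (intro allI conjI impI)
  subgoal by (simp add: algebra_simps power2_eq_square)
  apply algebra+
  done

lemma act_bsl_ideal: "a \<in> bsl_ideal q \<Longrightarrow> act a v = 0"
proof (induction arbitrary: v rule: bsl_ideal.induct)
  case (rel r)
  then show ?case using act_bsl_rels by blast
next
  case (mult a l r)
  then show ?case by (simp add: act_mult clinear_0[OF clinear_act])
qed (simp_all add: act_add)

end

section \<open>Normal forms\<close>

abbreviation gw :: freealg where "gw \<equiv> gz + gu"

(* of_poly2 p = p(u, z + u) *)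
definition of_wpoly :: "complex poly \<Rightarrow> freealg" where
  "of_wpoly r = fold_coeffs (\<lambda>c f. sc c + gw * f) r 0"

definition of_poly2 :: "poly2 \<Rightarrow> freealg" where
  "of_poly2 p = fold_coeffs (\<lambda>a f. of_wpoly a + gu * f) p 0"

lemma of_wpoly_0 [simp]: "of_wpoly 0 = 0"
  by (simp add: of_wpoly_def)

lemma of_wpoly_pCons: "of_wpoly (pCons c r) = sc c + gw * of_wpoly r"
  by (cases "c = 0 \<and> r = 0") (auto simp: of_wpoly_def)

lemma of_poly2_0 [simp]: "of_poly2 0 = 0"
  by (simp add: of_poly2_def)

lemma of_poly2_pCons: "of_poly2 (pCons a p) = of_wpoly a + gu * of_poly2 p"
  by (cases "a = 0 \<and> p = 0") (auto simp: of_poly2_def)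

lemma of_wpoly_add: "of_wpoly (r + r') = of_wpoly r + of_wpoly r'"
proof (induction r arbitrary: r' rule: pCons_induct)
  case (pCons c r)
  obtain c' s' where "r' = pCons c' s'" by (cases r')
  then show ?case using pCons(2)[of s']
    by (simp add: of_wpoly_pCons distrib_left algebra_simps flip: sc_add)
qed simp

lemma of_wpoly_smult: "of_wpoly (smult c r) = sc c * of_wpoly r"
proof (induction r rule: pCons_induct)
  case (pCons a r)
  then show ?case
    by (simp add: of_wpoly_pCons distrib_left sc_mult mult_sc_left_commute)
qed simp

lemma of_poly2_add: "of_poly2 (p + p') = of_poly2 p + of_poly2 p'"
proof (induction p arbitrary: p' rule: pCons_induct)
  case (pCons a p)
  obtain a' s' where "p' = pCons a' s'" by (cases p')
  then show ?case using pCons(2)[of s']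
    by (simp add: of_poly2_pCons of_wpoly_add distrib_left algebra_simps)
qed simp

lemma of_poly2_diff: "of_poly2 (p - p') = of_poly2 p - of_poly2 p'"
  using of_poly2_add[of "p - p'" p'] by (simp add: algebra_simps)

lemma of_poly2_cst_mult: "of_poly2 (cst c * p) = sc c * of_poly2 p"
proof (induction p rule: pCons_induct)
  case (pCons a p)
  have "cst c * pCons a p = pCons (smult c a) (cst c * p)"
    by (simp add: cst_def)
  then show ?case using pCons(2)
    by (simp add: of_poly2_pCons distrib_left of_wpoly_smult mult_sc_left_commute)
qed simp

lemma of_poly2_var_u_mult: "of_poly2 (var_u * p) = gu * of_poly2 p"
  by (simp add: var_u_def of_poly2_pCons)

lemma of_poly2_1: "of_poly2 1 = 1"
  by (simp add: one_pCons of_poly2_pCons of_wpoly_pCons)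

lemma beq_gw_commute:
  assumes "g \<in> {U, X, Y}"
  shows "beq q (gw * gen_el g) (gen_el g * gw)"
proof -
  have "gw * gen_el g - gen_el g * gw
      = gz * gen_el g - gen_el g * gz + (gu * gen_el g - gen_el g * gu)"
    by (simp add: algebra_simps)
  also have "\<dots> = (if g = U then gz * gu - gu * gz
      else if g = X then (gz * gx - (gx * gz + sc (1 - q^2) * gx * gu))
        + (gu * gx - sc (q^2) * gx * gu)
      else (gz * gy - (gy * gz + sc (1 - inverse (q^2)) * gy * gu))
        + (gu * gy - sc (inverse (q^2)) * gy * gu))"
    using assms by (auto simp: algebra_simps simp flip: sc_diff)
  also have "\<dots> \<in> bsl_ideal q"
    by (simp add: bsl_ideal.add bsl_ideal.rel bsl_rels_def)
  finally show ?thesis by (simp add: beq_def)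
qed

lemma beq_gw_of_poly2: "beq q (gw * of_poly2 p) (of_poly2 (var_w * p))"
proof (induction p rule: pCons_induct)
  case (pCons a p)
  have "gw * of_poly2 (pCons a p) = gw * of_wpoly a + (gw * gu) * of_poly2 p"
    by (simp add: of_poly2_pCons distrib_left mult.assoc)
  also have "beq q \<dots> (gw * of_wpoly a + (gu * gw) * of_poly2 p)"
    using beq_gw_commute[of U q] by (intro beq_add beq_refl beq_mult_right) simp
  also have "\<dots> = of_wpoly (pCons 0 a) + gu * (gw * of_poly2 p)"
    by (simp add: of_wpoly_pCons mult.assoc)
  also have "beq q \<dots> (of_wpoly (pCons 0 a) + gu * of_poly2 (var_w * p))"
    by (intro beq_add beq_refl beq_mult_left pCons(2))
  also have "\<dots> = of_poly2 (var_w * pCons a p)"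
    by (simp add: var_w_def of_poly2_pCons)
  finally show ?case .
qed simp

lemma beq_power_commute:
  assumes "beq q (a * g) (sc d * g * a)"
  shows "beq q (a * g ^ k) (sc (d ^ k) * g ^ k * a)"
proof (induction k)
  case (Suc k)
  have "a * g ^ Suc k = (a * g) * g ^ k"
    by (simp add: mult.assoc)
  also have "beq q \<dots> (sc d * g * a * g ^ k)"
    by (intro beq_mult_right assms)
  also have "\<dots> = sc d * g * (a * g ^ k)"
    by (simp add: mult.assoc)
  also have "beq q \<dots> (sc d * g * (sc (d ^ k) * g ^ k * a))"
    by (intro beq_mult_left Suc)
  also have "\<dots> = sc d * sc (d ^ k) * (g * g ^ k) * a"
    by (simp only: mult.assoc mult_sc_left_commute[of g])
  also have "\<dots> = sc (d ^ Suc k) * g ^ Suc k * a"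
    by (simp add: sc_mult)
  finally show ?case .
qed simp

lemma beq_mult_power_of_poly2:
  assumes "beq q (a * g) (sc d * g * a)" and "beq q (a * of_poly2 p) (of_poly2 p')"
  shows "beq q (a * (g ^ k * of_poly2 p)) (g ^ k * of_poly2 (cst (d ^ k) * p'))"
proof -
  have "a * (g ^ k * of_poly2 p) = (a * g ^ k) * of_poly2 p"
    by (simp add: mult.assoc)
  also have "beq q \<dots> (sc (d ^ k) * g ^ k * a * of_poly2 p)"
    by (intro beq_mult_right beq_power_commute assms(1))
  also have "\<dots> = sc (d ^ k) * g ^ k * (a * of_poly2 p)"
    by (simp add: mult.assoc)
  also have "beq q \<dots> (sc (d ^ k) * g ^ k * of_poly2 p')"
    by (intro beq_mult_left assms(2))
  also have "\<dots> = g ^ k * of_poly2 (cst (d ^ k) * p')"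
    by (simp only: of_poly2_cst_mult mult.assoc mult_sc_left_commute[of "g ^ k"])
  finally show ?thesis .
qed

context braided_sl2
begin

lemma beq_gu_gx: "beq q (gu * gx) (sc (q^2) * gx * gu)"
  by (rule beq_relI[where r = "gu * gx - sc (q^2) * gx * gu"]) (simp_all add: bsl_rels_def)

lemma beq_gu_gy: "beq q (gu * gy) (sc (inverse (q^2)) * gy * gu)"
  by (rule beq_relI[where r = "gu * gy - sc (inverse (q^2)) * gy * gu"])
    (simp_all add: bsl_rels_def)

lemma beq_gx_gy: "beq q (gx * gy) (gu * gu + sc (1 + inverse (q^2)) * gu * gz - 1)"
  by (rule beq_relI[where r = "gx * gy - (gu * gu + sc (1 + inverse (q^2)) * gu * gz - 1)"])
    (simp_all add: bsl_rels_def)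

lemma beq_gy_gx: "beq q (gy * gx) (gu * gu + sc (1 + q^2) * gu * gz - 1)"
  by (rule beq_relI[where r = "gy * gx - (gu * gu + sc (1 + q^2) * gu * gz - 1)"])
    (simp_all add: bsl_rels_def)

definition pbw :: "int \<Rightarrow> poly2 \<Rightarrow> freealg" where
  "pbw n p = (if 0 \<le> n then gx ^ nat n else gy ^ nat (- n)) * of_poly2 p"

lemma pbw_add: "pbw n (p + p') = pbw n p + pbw n p'"
  by (simp add: pbw_def of_poly2_add distrib_left)

lemma pbw_diff: "pbw n (p - p') = pbw n p - pbw n p'"
  by (simp add: pbw_def of_poly2_diff algebra_simps)

lemma pbw_cst_mult: "pbw n (cst c * p) = sc c * pbw n p"
  unfolding pbw_def of_poly2_cst_mult by (rule mult_sc_left_commute)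

lemma pbw_0 [simp]: "pbw n 0 = 0"
  by (simp add: pbw_def)

lemma pbw_cst: "pbw 0 (cst c) = sc c"
  using pbw_cst_mult[of 0 c 1] by (simp add: pbw_def of_poly2_1)

lemma gx_mult_pbw: "0 \<le> n \<Longrightarrow> gx * pbw n p = pbw (n + 1) p"
  by (simp add: pbw_def mult.assoc nat_add_distrib)

lemma gy_mult_pbw:
  assumes "n \<le> 0"
  shows "gy * pbw n p = pbw (n - 1) p"
proof -
  have "nat (- (n - 1)) = Suc (nat (- n))"
    using assms by simp
  then show ?thesis
    using assms by (cases "n = 0") (simp_all add: pbw_def mult.assoc)
qed

lemma pbw_cases:
  obtains (nonneg) k where "n = int k" and "\<And>p. pbw n p = gx ^ k * of_poly2 p"
      and "qpow n = (q^2) ^ k"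
  | (neg) k where "n = - int k" and "\<And>p. pbw n p = gy ^ k * of_poly2 p"
      and "qpow n = inverse (q^2) ^ k"
proof (cases "0 \<le> n")
  case True
  then show ?thesis
    using nonneg[of "nat n"] by (simp add: pbw_def qpow_def power_int_def)
next
  case False
  then show ?thesis
    using neg[of "nat (- n)"] by (simp add: pbw_def qpow_def power_int_def power_inverse)
qed

lemma beq_gu_pbw: "beq q (gu * pbw n p) (pbw n (cst (qpow n) * var_u * p))"
proof (cases rule: pbw_cases[of n])
  case (nonneg k)
  then show ?thesis
    using beq_mult_power_of_poly2[OF beq_gu_gx, of p "var_u * p" k]
    by (simp add: of_poly2_var_u_mult mult.assoc)
next
  case (neg k)
  then show ?thesis
    using beq_mult_power_of_poly2[OF beq_gu_gy, of p "var_u * p" k]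
    by (simp add: of_poly2_var_u_mult mult.assoc)
qed

lemma beq_gw_pbw: "beq q (gw * pbw n p) (pbw n (var_w * p))"
proof (cases rule: pbw_cases[of n])
  case (nonneg k)
  then show ?thesis
    using beq_mult_power_of_poly2[OF _ beq_gw_of_poly2, where g = gx and d = 1 and k = k]
      beq_gw_commute[of X]
    by (simp add: mult.assoc)
next
  case (neg k)
  then show ?thesis
    using beq_mult_power_of_poly2[OF _ beq_gw_of_poly2, where g = gy and d = 1 and k = k]
      beq_gw_commute[of Y]
    by (simp add: mult.assoc)
qed

lemma beq_gz_pbw: "beq q (gz * pbw n p) (pbw n ((var_w - cst (qpow n) * var_u) * p))"
proof -
  have "gz * pbw n p = gw * pbw n p - gu * pbw n p"
    by (simp add: algebra_simps)
  also have "beq q \<dots> (pbw n (var_w * p) - pbw n (cst (qpow n) * var_u * p))"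
    by (intro beq_diff beq_gw_pbw beq_gu_pbw)
  also have "\<dots> = pbw n ((var_w - cst (qpow n) * var_u) * p)"
    by (simp add: algebra_simps flip: pbw_diff)
  finally show ?thesis .
qed

lemma beq_quadratic_pbw:
  "beq q ((gu * gu + sc a * gu * gz - 1) * pbw n p)
     (pbw n ((cst (qpow n) ^ 2 * var_u ^ 2
        + cst a * cst (qpow n) * var_u * (var_w - cst (qpow n) * var_u) - 1) * p))"
proof -
  let ?U = "cst (qpow n) * var_u" and ?Z = "var_w - cst (qpow n) * var_u"
  have "(gu * gu + sc a * gu * gz - 1) * pbw n p
      = gu * (gu * pbw n p) + sc a * (gu * (gz * pbw n p)) - pbw n p"
    by (simp add: algebra_simps)
  also have "beq q \<dots> (gu * pbw n (?U * p) + sc a * (gu * pbw n (?Z * p)) - pbw n p)"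
    by (intro beq_diff beq_add beq_mult_left beq_gu_pbw beq_gz_pbw beq_refl)
  also have "beq q \<dots> (pbw n (?U * (?U * p)) + sc a * pbw n (?U * (?Z * p)) - pbw n p)"
    by (intro beq_diff beq_add beq_mult_left beq_gu_pbw beq_refl)
  also have "\<dots> = pbw n ((cst (qpow n) ^ 2 * var_u ^ 2 + cst a * cst (qpow n) * var_u * ?Z - 1) * p)"
    by (simp add: pbw_add pbw_diff algebra_simps power2_eq_square flip: pbw_cst_mult)
  finally show ?thesis .
qed

lemma xy_coeff_eq:
  "cst (qpow n) ^ 2 * var_u ^ 2
    + cst (1 + inverse (q^2)) * cst (qpow n) * var_u * (var_w - cst (qpow n) * var_u) - 1
    = xy_coeff n"
  by (simp add: xy_coeff_def cst_simps) algebra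

lemma xy_coeff_add_1_eq:
  "cst (qpow n) ^ 2 * var_u ^ 2
    + cst (1 + q^2) * cst (qpow n) * var_u * (var_w - cst (qpow n) * var_u) - 1
    = xy_coeff (n + 1)"
  using cst_inverse_q_square by (simp add: xy_coeff_def qpow_add_1 cst_simps) algebra

lemma beq_gx_pbw: "beq q (gx * pbw n p) (pbw (n + 1) (x_coeff (n + 1) * p))"
proof (cases "0 \<le> n")
  case True
  then show ?thesis by (simp add: gx_mult_pbw x_coeff_def)
next
  case False
  then have "gx * pbw n p = (gx * gy) * pbw (n + 1) p"
    using gy_mult_pbw[of "n + 1" p] by (simp add: mult.assoc)
  also have "beq q \<dots> ((gu * gu + sc (1 + inverse (q^2)) * gu * gz - 1) * pbw (n + 1) p)"
    by (intro beq_mult_right beq_gx_gy)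
  also have "beq q \<dots> (pbw (n + 1) (xy_coeff (n + 1) * p))"
    using beq_quadratic_pbw[of "1 + inverse (q^2)" "n + 1" p] by (simp only: xy_coeff_eq)
  finally show ?thesis
    using False by (simp add: x_coeff_def)
qed

lemma beq_gy_pbw: "beq q (gy * pbw n p) (pbw (n - 1) (y_coeff (n - 1) * p))"
proof (cases "n \<le> 0")
  case True
  then show ?thesis by (simp add: gy_mult_pbw y_coeff_def)
next
  case False
  then have "gy * pbw n p = (gy * gx) * pbw (n - 1) p"
    using gx_mult_pbw[of "n - 1" p] by (simp add: mult.assoc)
  also have "beq q \<dots> ((gu * gu + sc (1 + q^2) * gu * gz - 1) * pbw (n - 1) p)"
    by (intro beq_mult_right beq_gy_gx)
  also have "beq q \<dots> (pbw (n - 1) (xy_coeff (n - 1 + 1) * p))"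
    using beq_quadratic_pbw[of "1 + q^2" "n - 1" p] by (simp only: xy_coeff_add_1_eq)
  finally show ?thesis
    using False by (simp add: y_coeff_def)
qed

lemma beq_gen_el_pbw: "\<exists>m p'. beq q (gen_el g * pbw n p) (pbw m p')"
  using beq_gu_pbw beq_gz_pbw beq_gx_pbw beq_gy_pbw by (cases g) blast+

lemma beq_single_pbw: "\<exists>n p. beq q (Poly_Mapping.single w c) (pbw n p)"
proof -
  have "\<exists>n p. beq q (Poly_Mapping.single (Word gs) c) (pbw n p)" for gs
  proof (induction gs)
    case Nil
    then show ?case
      using pbw_cst[of c] by (metis beq_refl single_Word_Nil)
  next
    case (Cons g gs)
    then obtain n p where "beq q (Poly_Mapping.single (Word gs) c) (pbw n p)"
      by blast
    then have "beq q (Poly_Mapping.single (Word (g # gs)) c) (gen_el g * pbw n p)"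
      unfolding single_Word_Cons by (rule beq_mult_left)
    then show ?case
      using beq_gen_el_pbw[of g n p] by (meson beq_trans)
  qed
  then show ?thesis by (cases w) simp
qed

end
context braided_sl2
begin

definition nf :: "freealg \<Rightarrow> gseq" where
  "nf f = act f (gsingle 0 1)"

lemma nf_add: "nf (a + b) = nf a + nf b"
  by (simp add: nf_def act_add)

lemma nf_diff: "nf (a - b) = nf a - nf b"
  by (simp add: nf_def act_diff)

lemma nf_uminus: "nf (- a) = - nf a"
  by (simp add: nf_def act_uminus)

lemma nf_mult: "nf (a * b) = act a (nf b)"
  by (simp add: nf_def act_mult)

lemma nf_0 [simp]: "nf 0 = 0"
  by (simp add: nf_def)

lemma nf_sc_mult: "nf (sc c * a) = cscale c (nf a)"
  by (simp add: nf_mult act_sc)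

lemma nf_sc: "nf (sc c) = gsingle 0 (cst c)"
  by (simp add: nf_def act_sc cscale_gsingle)

lemma beq_imp_nf_eq: "beq q a b \<Longrightarrow> nf a = nf b"
  unfolding beq_def by (drule act_bsl_ideal) (simp add: nf_def act_diff)

lemma gen_act_gsingle:
  "gen_act U (gsingle n p) = gsingle n (cst (qpow n) * var_u * p)"
  "gen_act Z (gsingle n p) = gsingle n ((var_w - cst (qpow n) * var_u) * p)"
  "gen_act X (gsingle n p) = gsingle (n + 1) (x_coeff (n + 1) * p)"
  "gen_act Y (gsingle n p) = gsingle (n - 1) (y_coeff (n - 1) * p)"
  by (auto simp: gen_act_apply gsingle_def fun_eq_iff)

lemma nf_of_wpoly: "nf (of_wpoly r) = gsingle 0 [:r:]"
proof (induction r)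
  case (pCons c r)
  have "nf (of_wpoly (pCons c r)) = gsingle 0 (cst c) + act (gz + gu) (gsingle 0 [:r:])"
    using pCons(2) by (simp add: of_wpoly_pCons nf_add nf_mult nf_sc)
  also have "\<dots> = gsingle 0 (cst c + var_w * [:r:])"
    by (simp add: act_add act_gen_el gen_act_gsingle gsingle_add algebra_simps smult_diff_right)
  also have "cst c + var_w * [:r:] = [:pCons c r:]"
    by (simp add: cst_def var_w_def)
  finally show ?case .
qed simp

lemma nf_of_poly2: "nf (of_poly2 p) = gsingle 0 p"
proof (induction p)
  case (pCons a p)
  have "nf (of_poly2 (pCons a p)) = gsingle 0 [:a:] + act gu (gsingle 0 p)"
    using pCons(2) by (simp add: of_poly2_pCons nf_add nf_mult nf_of_wpoly)
  also have "\<dots> = gsingle 0 (pCons a p)"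
    by (simp add: act_gen_el gen_act_gsingle gsingle_add var_u_def)
  finally show ?case .
qed simp

lemma nf_pbw: "nf (pbw n p) = gsingle n p"
proof (cases rule: pbw_cases[of n])
  case (nonneg k)
  have "nf (gx ^ k * of_poly2 p) = gsingle (int k) p"
  proof (induction k)
    case (Suc k)
    then have "nf (gx ^ Suc k * of_poly2 p) = gen_act X (gsingle (int k) p)"
      by (simp add: mult.assoc nf_mult act_gen_el)
    then show ?case
      by (simp add: gen_act_gsingle x_coeff_def add.commute)
  qed (simp add: nf_of_poly2)
  then show ?thesis using nonneg by simp
next
  case (neg k)
  have "nf (gy ^ k * of_poly2 p) = gsingle (- int k) p"
  proof (induction k)
    case (Suc k)
    then have "nf (gy ^ Suc k * of_poly2 p) = gen_act Y (gsingle (- int k) p)"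
      by (simp add: mult.assoc nf_mult act_gen_el)
    also have "\<dots> = gsingle (- int k - 1) p"
      by (simp add: gen_act_gsingle y_coeff_def)
    also have "- int k - 1 = - int (Suc k)"
      by simp
    finally show ?case .
  qed (simp add: nf_of_poly2)
  then show ?thesis using neg by simp
qed

lemma beq_sum_pbw_nf:
  "\<exists>S. finite S \<and> (\<forall>n. n \<notin> S \<longrightarrow> nf f n = 0) \<and> beq q f (\<Sum>n\<in>S. pbw n (nf f n))"
proof (induction f rule: poly_mapping_single_add_induct)
  case zero
  show ?case by (intro exI[of _ "{}"]) (simp add: fun_ops)
next
  case (single_add f w c)
  then obtain S where S: "finite S" "\<And>n. n \<notin> S \<Longrightarrow> nf f n = 0"
    and beq_f: "beq q f (\<Sum>n\<in>S. pbw n (nf f n))"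
    by blast
  obtain m p where beq_single: "beq q (Poly_Mapping.single w c) (pbw m p)"
    using beq_single_pbw by blast
  then have nf_single: "nf (Poly_Mapping.single w c) = gsingle m p"
    by (simp add: beq_imp_nf_eq nf_pbw)
  have "(\<Sum>n\<in>insert m S. pbw n (gsingle m p n)) = pbw m p"
    using S(1) by (simp add: gsingle_def if_distrib sum.delta' cong: if_cong)
  moreover have "(\<Sum>n\<in>insert m S. pbw n (nf f n)) = (\<Sum>n\<in>S. pbw n (nf f n))"
    using S by (cases "m \<in> S") (simp_all add: insert_absorb)
  ultimately have "(\<Sum>n\<in>insert m S. pbw n (nf (Poly_Mapping.single w c + f) n))
      = pbw m p + (\<Sum>n\<in>S. pbw n (nf f n))"
    by (simp add: nf_add nf_single fun_ops pbw_add sum.distrib)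
  then have "beq q (Poly_Mapping.single w c + f)
      (\<Sum>n\<in>insert m S. pbw n (nf (Poly_Mapping.single w c + f) n))"
    by (simp add: beq_add beq_single beq_f)
  moreover have "n \<notin> insert m S \<Longrightarrow> nf (Poly_Mapping.single w c + f) n = 0" for n
    using S(2)[of n] by (simp add: nf_add nf_single fun_ops gsingle_def)
  ultimately show ?case
    using S(1) by blast
qed

lemma beq_iff_nf_eq: "beq q a b \<longleftrightarrow> nf a = nf b"
proof
  assume "nf a = nf b"
  then have "nf (a - b) = 0"
    by (simp add: nf_diff)
  then have "beq q (a - b) 0"
    using beq_sum_pbw_nf[of "a - b"] by (auto simp: fun_ops)
  then show "beq q a b"
    by (simp add: beq_def)
qed (rule beq_imp_nf_eq)

lemma fin_supp_nf: "fin_supp (nf f)"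
proof -
  obtain S where "finite S" and "\<forall>n. n \<notin> S \<longrightarrow> nf f n = 0"
    using beq_sum_pbw_nf by blast
  then show ?thesis
    unfolding fin_supp_def by (auto intro: finite_subset)
qed

lemma nf_surj:
  assumes "fin_supp m"
  shows "\<exists>f. nf f = m"
proof
  have "nf (\<Sum>n\<in>T. pbw n (m n)) = (\<Sum>n\<in>T. gsingle n (m n))" for T
    by (induction T rule: infinite_finite_induct) (simp_all add: nf_add nf_pbw)
  then show "nf (\<Sum>n\<in>{n. m n \<noteq> 0}. pbw n (m n)) = m"
    using assms by (simp add: fin_supp_def sum_gsingle)
qed

end
section \<open>Right multiplication in normal form\<close>

definition scale_u :: "complex \<Rightarrow> poly2 \<Rightarrow> poly2" where
  "scale_u c p = pcompose p [:0, [:c:]:]"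

lemma scale_u_add: "scale_u c (a + b) = scale_u c a + scale_u c b"
  by (simp add: scale_u_def pcompose_add)

lemma scale_u_diff: "scale_u c (a - b) = scale_u c a - scale_u c b"
  by (simp add: scale_u_def pcompose_diff)

lemma scale_u_uminus: "scale_u c (- a) = - scale_u c a"
  by (simp add: scale_u_def pcompose_uminus)

lemma scale_u_mult: "scale_u c (a * b) = scale_u c a * scale_u c b"
  by (simp add: scale_u_def pcompose_mult)

lemma scale_u_0 [simp]: "scale_u c 0 = 0"
  by (simp add: scale_u_def)

lemma scale_u_1 [simp]: "scale_u c 1 = 1"
  by (simp add: scale_u_def pcompose_1)

lemma scale_u_power: "scale_u c (a ^ k) = scale_u c a ^ k"
  by (induction k) (simp_all add: scale_u_mult)

lemma scale_u_cst [simp]: "scale_u c (cst a) = cst a"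
  by (simp add: scale_u_def cst_def)

lemma scale_u_var_w [simp]: "scale_u c var_w = var_w"
  by (simp add: scale_u_def var_w_def)

lemma scale_u_var_u: "scale_u c var_u = cst c * var_u"
  by (simp add: scale_u_def var_u_def pcompose_pCons cst_def)

lemma scale_u_scale_u: "scale_u c (scale_u d p) = scale_u (d * c) p"
proof -
  have "pcompose [:0, [:d:]:] [:0, [:c:]:] = [:0, [:d * c:]:]"
    by (simp add: pcompose_pCons)
  then show ?thesis
    by (simp add: scale_u_def pcompose_assoc[symmetric])
qed

lemma scale_u_1_left: "scale_u 1 p = p"
  by (metis scale_u_def pcompose_idR one_pCons)

lemmas scale_u_simps = scale_u_add scale_u_diff scale_u_uminus scale_u_mult scale_u_power
    scale_u_var_u

context braided_sl2
begin

definition sigma :: "poly2 \<Rightarrow> poly2" where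
  "sigma = scale_u (q^2)"

definition sigma_inv :: "poly2 \<Rightarrow> poly2" where
  "sigma_inv = scale_u (inverse (q^2))"

lemma sigma_sigma_inv [simp]: "sigma (sigma_inv p) = p"
  using q_nonzero by (simp add: sigma_def sigma_inv_def scale_u_scale_u scale_u_1_left)

lemma sigma_inv_sigma [simp]: "sigma_inv (sigma p) = p"
  using q_nonzero by (simp add: sigma_def sigma_inv_def scale_u_scale_u scale_u_1_left)

lemma sigma_eq_0_iff [simp]: "sigma a = 0 \<longleftrightarrow> a = 0"
  by (metis sigma_inv_sigma scale_u_0 sigma_def)

lemma sigma_inv_eq_0_iff [simp]: "sigma_inv a = 0 \<longleftrightarrow> a = 0"
  by (metis sigma_sigma_inv scale_u_0 sigma_inv_def)

lemma sigma_simps: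
  "sigma (a + b) = sigma a + sigma b" "sigma (a - b) = sigma a - sigma b"
  "sigma (a * b) = sigma a * sigma b" "sigma (- a) = - sigma a"
  "sigma 0 = 0" "sigma 1 = 1" "sigma (cst c) = cst c" "sigma var_w = var_w"
  "sigma var_u = cst (q^2) * var_u"
  by (simp_all add: sigma_def scale_u_simps)

lemma sigma_inv_simps:
  "sigma_inv (a + b) = sigma_inv a + sigma_inv b" "sigma_inv (a - b) = sigma_inv a - sigma_inv b"
  "sigma_inv (a * b) = sigma_inv a * sigma_inv b" "sigma_inv (- a) = - sigma_inv a"
  "sigma_inv 0 = 0" "sigma_inv 1 = 1" "sigma_inv (cst c) = cst c" "sigma_inv var_w = var_w"
  "sigma_inv var_u = cst (inverse (q^2)) * var_u"
  by (simp_all add: sigma_inv_def scale_u_simps)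

lemma sigma_inv_power: "sigma_inv (a ^ k) = sigma_inv a ^ k"
  by (simp add: sigma_inv_def scale_u_power)

lemma sigma_xy_coeff: "sigma (xy_coeff n) = xy_coeff (n + 1)"
  by (simp add: q_nonzero sigma_def xy_coeff_def scale_u_simps qpow_add_1 cst_simps) algebra

lemma sigma_inv_xy_coeff: "sigma_inv (xy_coeff n) = xy_coeff (n - 1)"
  by (metis sigma_inv_sigma sigma_xy_coeff diff_add_cancel)

definition rx_coeff :: "int \<Rightarrow> poly2" where
  "rx_coeff n = (if 1 \<le> n then 1 else xy_coeff 1)"

definition ry_coeff :: "int \<Rightarrow> poly2" where
  "ry_coeff n = (if n \<le> -1 then 1 else xy_coeff 0)"

definition rmul_x :: "gseq \<Rightarrow> gseq" where
  "rmul_x v = (\<lambda>n. rx_coeff n * sigma (v (n - 1)))"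

definition rmul_y :: "gseq \<Rightarrow> gseq" where
  "rmul_y v = (\<lambda>n. ry_coeff n * sigma_inv (v (n + 1)))"

definition rmul_u :: "gseq \<Rightarrow> gseq" where
  "rmul_u v = (\<lambda>n. v n * var_u)"

lemma clinear_rmul_x: "clinear rmul_x"
  by (simp add: clinear_def rmul_x_def fun_eq_iff fun_ops cscale_apply sigma_simps algebra_simps)

lemma clinear_rmul_y: "clinear rmul_y"
  by (simp add: clinear_def rmul_y_def fun_eq_iff fun_ops cscale_apply sigma_inv_simps
      algebra_simps)

lemma clinear_rmul_u: "clinear rmul_u"
  by (simp add: clinear_def rmul_u_def fun_eq_iff fun_ops cscale_apply algebra_simps)

lemma gen_act_rmul_u: "gen_act g (rmul_u v) = rmul_u (gen_act g v)"
  by (cases g) (simp_all add: gen_act_def rmul_u_def fun_eq_iff algebra_simps)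

lemma gen_act_rmul_x: "gen_act g (rmul_x v) = rmul_x (gen_act g v)"
proof -
  have "gen_act g (rmul_x v) n = rmul_x (gen_act g v) n" for n
    using cst_inverse_q_square
    by (cases g; cases "n = 0")
      (auto simp: gen_act_apply rmul_x_def sigma_simps sigma_xy_coeff qpow_diff_1 cst_simps
        x_coeff_def y_coeff_def rx_coeff_def)
  then show ?thesis by (simp add: fun_eq_iff)
qed

lemma gen_act_rmul_y: "gen_act g (rmul_y v) = rmul_y (gen_act g v)"
proof -
  have "gen_act g (rmul_y v) n = rmul_y (gen_act g v) n" for n
    using cst_inverse_q_square
    by (cases g; cases "n = -1"; cases "n = 0")
      (auto simp: gen_act_apply rmul_y_def sigma_inv_simps sigma_inv_xy_coeff sigma_inv_power
        qpow_add_1 cst_simps x_coeff_def y_coeff_def ry_coeff_def mult.commute add.commute)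
  then show ?thesis by (simp add: fun_eq_iff)
qed

lemma nf_mult_gx: "nf (a * gx) = rmul_x (nf a)"
proof -
  have "nf gx = rmul_x (gsingle 0 1)"
    by (simp add: nf_def act_gen_el gen_act_apply rmul_x_def gsingle_def fun_eq_iff x_coeff_def
        rx_coeff_def sigma_simps)
  then show ?thesis
    by (simp add: nf_mult act_commute[OF gen_act_rmul_x clinear_rmul_x]) (simp add: nf_def)
qed

lemma nf_mult_gy: "nf (a * gy) = rmul_y (nf a)"
proof -
  have "nf gy = rmul_y (gsingle 0 1)"
    by (simp add: nf_def act_gen_el gen_act_apply rmul_y_def gsingle_def fun_eq_iff y_coeff_def
        ry_coeff_def sigma_inv_simps)
  then show ?thesis
    by (simp add: nf_mult act_commute[OF gen_act_rmul_y clinear_rmul_y]) (simp add: nf_def)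
qed

lemma nf_mult_gu: "nf (a * gu) = rmul_u (nf a)"
proof -
  have "nf gu = rmul_u (gsingle 0 1)"
    by (simp add: nf_def act_gen_el gen_act_apply rmul_u_def gsingle_def fun_eq_iff)
  then show ?thesis
    by (simp add: nf_mult act_commute[OF gen_act_rmul_u clinear_rmul_u]) (simp add: nf_def)
qed

lemma nf_mult_sc: "nf (a * sc c) = cscale c (nf a)"
proof -
  have "nf (sc c) = cscale c (gsingle 0 1)"
    by (simp add: nf_sc cscale_gsingle)
  then show ?thesis
    by (simp add: nf_mult clinear_cscale[OF clinear_act]) (simp add: nf_def)
qed

end
section \<open>The resolution degree by degree\<close>

context braided_sl2
begin

definition u_minus_1 :: poly2 where
  "u_minus_1 = var_u - 1"

lemma u_minus_1_nonzero: "u_minus_1 \<noteq> 0"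
proof
  assume "u_minus_1 = 0"
  then have "coeff u_minus_1 1 = 0" by simp
  then show False by (simp add: u_minus_1_def var_u_def)
qed

lemma u_minus_1_mult_cancel: "u_minus_1 * a = u_minus_1 * b \<Longrightarrow> a = b"
  using u_minus_1_nonzero by simp

definition twisted_ry_coeff :: "int \<Rightarrow> poly2" where
  "twisted_ry_coeff n = (if n \<le> 0 then 1 else xy_coeff 1)"

definition twisted_rx_coeff :: "int \<Rightarrow> poly2" where
  "twisted_rx_coeff n = (if 0 \<le> n then 1 else xy_coeff 0)"

lemma twisted_ry_coeff_rx_coeff: "twisted_ry_coeff n * rx_coeff n = xy_coeff 1"
  by (simp add: twisted_ry_coeff_def rx_coeff_def)

lemma twisted_rx_coeff_ry_coeff: "twisted_rx_coeff n * ry_coeff n = xy_coeff 0"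
  by (simp add: twisted_rx_coeff_def ry_coeff_def)

lemma cst_q_square_inverse:
  "cst (inverse (q^2)) * cst (q^2) = 1" "cst (q^2) * cst (inverse (q^2)) = 1"
  using q_nonzero by (simp_all flip: cst_mult)

lemma xy_coeff_1_eq: "xy_coeff 1 = cst (q^2) * xy_coeff 0 + cst (1 - q^2) * (var_u + 1) * u_minus_1"
  using cst_inverse_q_square by (simp add: xy_coeff_def u_minus_1_def qpow_add_1[of 0,
      simplified] cst_simps) algebra

definition phi1_deg :: "int \<Rightarrow> poly2 \<times> poly2 \<times> poly2 \<Rightarrow> poly2" where
  "phi1_deg n = (\<lambda>(a, b, c). rx_coeff n * a + ry_coeff n * b + u_minus_1 * c)"

definition phi2_deg :: "int \<Rightarrow> poly2 \<times> poly2 \<times> poly2 \<Rightarrow> poly2 \<times> poly2 \<times> poly2" where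
  "phi2_deg n = (\<lambda>(a, b, c).
     (a * u_minus_1 - twisted_ry_coeff n * c,
      b * u_minus_1 + cst (q^2) * twisted_rx_coeff n * c,
      - rx_coeff n * a - ry_coeff n * b + cst (1 - q^2) * (var_u + 1) * c))"

definition phi3_deg :: "int \<Rightarrow> poly2 \<Rightarrow> poly2 \<times> poly2 \<times> poly2" where
  "phi3_deg n h = (twisted_ry_coeff n * h, - cst (q^2) * twisted_rx_coeff n * h, u_minus_1 * h)"

lemma phi1_deg_phi2_deg: "phi1_deg n (phi2_deg n x) = 0"
proof -
  obtain a b c where x: "x = (a, b, c)" by (cases x)
  have "phi1_deg n (phi2_deg n x) = c * (cst (1 - q^2) * (var_u + 1) * u_minus_1
      - (twisted_ry_coeff n * rx_coeff n - cst (q^2) * (twisted_rx_coeff n * ry_coeff n)))"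
    by (simp add: x phi1_deg_def phi2_deg_def algebra_simps)
  also have "\<dots> = 0"
    by (simp add: twisted_ry_coeff_rx_coeff twisted_rx_coeff_ry_coeff xy_coeff_1_eq)
  finally show ?thesis .
qed

lemma phi2_deg_phi3_deg: "phi2_deg n (phi3_deg n h) = (0, 0, 0)"
proof -
  have "- rx_coeff n * (twisted_ry_coeff n * h) + ry_coeff n * (cst (q^2) * twisted_rx_coeff n * h)
      + cst (1 - q^2) * (var_u + 1) * (u_minus_1 * h)
    = h * (cst (1 - q^2) * (var_u + 1) * u_minus_1
      - (twisted_ry_coeff n * rx_coeff n - cst (q^2) * (twisted_rx_coeff n * ry_coeff n)))"
    by (simp add: algebra_simps)
  also have "\<dots> = 0"
    by (simp add: twisted_ry_coeff_rx_coeff twisted_rx_coeff_ry_coeff xy_coeff_1_eq)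
  finally show ?thesis
    by (simp add: phi2_deg_def phi3_deg_def algebra_simps)
qed

lemma phi3_deg_eq_0_iff: "phi3_deg n h = (0, 0, 0) \<longleftrightarrow> h = 0"
  using u_minus_1_nonzero by (auto simp: phi3_deg_def)

lemma u_minus_1_dvd:
  assumes "xy_coeff 1 * \<alpha> + xy_coeff 0 * \<beta> + u_minus_1 * \<gamma> = 0"
  shows "u_minus_1 dvd \<beta> + cst (q^2) * \<alpha>"
proof -
  have "xy_coeff 0 * (\<beta> + cst (q^2) * \<alpha>) + u_minus_1 * (\<gamma> + cst (1 - q^2) * (var_u + 1) * \<alpha>)
      = xy_coeff 1 * \<alpha> + xy_coeff 0 * \<beta> + u_minus_1 * \<gamma>"
    by (simp add: xy_coeff_1_eq algebra_simps)
  then have "xy_coeff 0 * (\<beta> + cst (q^2) * \<alpha>) = - u_minus_1 * (\<gamma> + cst (1 - q^2) * (var_u + 1) * \<alpha>)"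
    using assms by (simp add: eq_neg_iff_add_eq_0)
  moreover have "poly u_minus_1 1 = 0"
    by (simp add: u_minus_1_def var_u_def)
  ultimately have "poly (xy_coeff 0 * (\<beta> + cst (q^2) * \<alpha>)) 1 = 0"
    by (simp only: poly_mult poly_minus mult_minus_left mult_zero_left minus_zero)
  then have "poly (xy_coeff 0) 1 * poly (\<beta> + cst (q^2) * \<alpha>) 1 = 0"
    by (simp only: poly_mult)
  moreover have "coeff (poly (xy_coeff 0) 1) 1 = 1 + inverse (q^2)"
    by (simp add: xy_coeff_def cst_def var_u_def var_w_def)
  then have "poly (xy_coeff 0) 1 \<noteq> 0"
    using one_plus_inverse_q_square_nonzero by auto
  ultimately have "poly (\<beta> + cst (q^2) * \<alpha>) 1 = 0"
    by simp
  then show ?thesis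
    using poly_eq_0_iff_dvd[of "\<beta> + cst (q^2) * \<alpha>" 1]
    by (simp add: u_minus_1_def var_u_def one_pCons)
qed

lemma phi1_deg_exact:
  assumes "phi1_deg n (\<alpha>, \<beta>, \<gamma>) = 0"
  shows "\<exists>x. phi2_deg n x = (\<alpha>, \<beta>, \<gamma>)"
proof -
  have h: "rx_coeff n * \<alpha> + ry_coeff n * \<beta> + u_minus_1 * \<gamma> = 0"
    using assms by (simp add: phi1_deg_def)
  note key = xy_coeff_1_eq cst_q_square_inverse
  consider (pos) "1 \<le> n" | (zero) "n = 0" | (neg) "n \<le> -1"
    by linarith
  then show ?thesis
  proof cases
    case pos
    then have "\<alpha> + xy_coeff 0 * \<beta> + u_minus_1 * \<gamma> = 0"
      using h by (simp add: rx_coeff_def ry_coeff_def)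
    then have "phi2_deg n
        (cst (inverse (q^2) * (1 - q^2)) * (var_u + 1) * \<beta> - \<gamma>, 0, cst (inverse (q^2)) * \<beta>)
        = (\<alpha>, \<beta>, \<gamma>)"
      using pos key
      by (simp add: phi2_deg_def twisted_ry_coeff_def twisted_rx_coeff_def rx_coeff_def
          ry_coeff_def cst_mult) algebra
    then show ?thesis by blast
  next
    case zero
    (* only in degree 0 is neither rx_coeff n nor ry_coeff n a unit, so we must divide by u - 1 *)
    then have h0: "xy_coeff 1 * \<alpha> + xy_coeff 0 * \<beta> + u_minus_1 * \<gamma> = 0"
      using h by (simp add: rx_coeff_def ry_coeff_def)
    then obtain K where K: "\<beta> + cst (q^2) * \<alpha> = u_minus_1 * K"
      using u_minus_1_dvd by blast
    have "- cst (1 - q^2) * (var_u + 1) * \<alpha> - xy_coeff 0 * K = \<gamma>"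
      by (rule u_minus_1_mult_cancel) (use h0 K key in algebra)
    moreover have "K * u_minus_1 - cst (q^2) * \<alpha> = \<beta>"
      using K by (simp add: diff_eq_eq mult.commute)
    ultimately have "phi2_deg n (0, K, - \<alpha>) = (\<alpha>, \<beta>, \<gamma>)"
      by (simp add: zero phi2_deg_def twisted_ry_coeff_def twisted_rx_coeff_def rx_coeff_def
          ry_coeff_def)
    then show ?thesis by blast
  next
    case neg
    then have "xy_coeff 1 * \<alpha> + \<beta> + u_minus_1 * \<gamma> = 0"
      using h by (simp add: rx_coeff_def ry_coeff_def)
    then have "phi2_deg n (0, - cst (1 - q^2) * (var_u + 1) * \<alpha> - \<gamma>, - \<alpha>) = (\<alpha>, \<beta>, \<gamma>)"
      using neg key
      by (simp add: phi2_deg_def twisted_ry_coeff_def twisted_rx_coeff_def rx_coeff_def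
          ry_coeff_def) algebra
    then show ?thesis by blast
  qed
qed

lemma phi2_deg_exact:
  assumes "phi2_deg n (\<alpha>, \<beta>, \<gamma>) = (0, 0, 0)"
  shows "\<exists>h. phi3_deg n h = (\<alpha>, \<beta>, \<gamma>)"
proof (cases "1 \<le> n")
  case True
  then have e1: "\<alpha> * u_minus_1 - xy_coeff 1 * \<gamma> = 0" and e2: "\<beta> * u_minus_1 + cst (q^2) * \<gamma> = 0"
    using assms by (simp_all add: phi2_deg_def twisted_ry_coeff_def twisted_rx_coeff_def)
  define h where "h = - cst (inverse (q^2)) * \<beta>"
  have "u_minus_1 * h = \<gamma>"
    using e2 cst_q_square_inverse unfolding h_def by algebra
  moreover have "xy_coeff 1 * h = \<alpha>"
    by (rule u_minus_1_mult_cancel) (use e1 \<open>u_minus_1 * h = \<gamma>\<close> in algebra)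
  moreover have "- cst (q^2) * h = \<beta>"
    using cst_q_square_inverse unfolding h_def by algebra
  ultimately have "phi3_deg n h = (\<alpha>, \<beta>, \<gamma>)"
    using True by (simp add: phi3_deg_def twisted_ry_coeff_def twisted_rx_coeff_def)
  then show ?thesis by blast
next
  case False
  then have e1: "\<alpha> * u_minus_1 - \<gamma> = 0"
    and e2: "\<beta> * u_minus_1 + cst (q^2) * twisted_rx_coeff n * \<gamma> = 0"
    using assms by (simp_all add: phi2_deg_def twisted_ry_coeff_def)
  have "- cst (q^2) * twisted_rx_coeff n * \<alpha> = \<beta>"
    by (rule u_minus_1_mult_cancel) (use e1 e2 in algebra)
  then have "phi3_deg n \<alpha> = (\<alpha>, \<beta>, \<gamma>)"
    using False e1 by (simp add: phi3_deg_def twisted_ry_coeff_def algebra_simps)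
  then show ?thesis by blast
qed

end
context braided_sl2
begin

definition Phi1 :: "gseq \<times> gseq \<times> gseq \<Rightarrow> gseq" where
  "Phi1 = (\<lambda>(F, G, H). rmul_x F + rmul_y G + rmul_u H - H)"

definition Phi2 :: "gseq \<times> gseq \<times> gseq \<Rightarrow> gseq \<times> gseq \<times> gseq" where
  "Phi2 = (\<lambda>(F, G, H).
     (rmul_u (cscale (inverse (q^2)) F) - F - rmul_y H,
      rmul_u (cscale (q^2) G) - G + rmul_x (cscale (q^2) H),
      - rmul_x F - rmul_y G + rmul_u (cscale (1 - q^2) H) + cscale (1 - q^2) H))"

definition Phi3 :: "gseq \<Rightarrow> gseq \<times> gseq \<times> gseq" where
  "Phi3 h = (rmul_y h, - rmul_x (cscale (q^2) h), rmul_u h - h)"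

(* In these coordinates Phi1, Phi2, Phi3 act degree by degree as phi1_deg, phi2_deg, phi3_deg. *)
definition twist :: "gseq \<times> gseq \<times> gseq \<Rightarrow> int \<Rightarrow> poly2 \<times> poly2 \<times> poly2" where
  "twist = (\<lambda>(F, G, H) n. (sigma (F (n - 1)), sigma_inv (G (n + 1)), H n))"

definition untwist :: "(int \<Rightarrow> poly2 \<times> poly2 \<times> poly2) \<Rightarrow> gseq \<times> gseq \<times> gseq" where
  "untwist D =
     (\<lambda>n. sigma_inv (fst (D (n + 1))), \<lambda>n. sigma (fst (snd (D (n - 1)))), \<lambda>n. snd (snd (D n)))"

lemma twist_untwist [simp]: "twist (untwist D) = D"
  by (simp add: twist_def untwist_def)

lemma untwist_twist [simp]: "untwist (twist V) = V"
  by (cases V) (simp add: twist_def untwist_def)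

lemma twist_zero: "twist (0, 0, 0) = (\<lambda>n. (0, 0, 0))"
  by (simp add: twist_def fun_ops sigma_simps sigma_inv_simps)

lemma Phi1_apply: "Phi1 V n = phi1_deg n (twist V n)"
  by (cases V) (simp add: Phi1_def twist_def phi1_deg_def fun_ops rmul_x_def rmul_y_def
      rmul_u_def u_minus_1_def
      algebra_simps)

lemma sigma_ry_coeff: "sigma (ry_coeff (n - 1)) = twisted_ry_coeff n"
  by (simp add: ry_coeff_def twisted_ry_coeff_def sigma_simps sigma_xy_coeff)

lemma sigma_inv_rx_coeff: "sigma_inv (rx_coeff (n + 1)) = twisted_rx_coeff n"
  by (simp add: rx_coeff_def twisted_rx_coeff_def sigma_inv_simps sigma_inv_xy_coeff)

lemma twist_Phi2: "twist (Phi2 V) n = phi2_deg n (twist V n)"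
  by (cases V) (simp add: Phi2_def twist_def phi2_deg_def fun_ops rmul_x_def rmul_y_def
      rmul_u_def u_minus_1_def
      cscale_apply sigma_simps sigma_inv_simps sigma_ry_coeff sigma_inv_rx_coeff
          cst_q_square_inverse
      algebra_simps)

lemma twist_Phi3: "twist (Phi3 h) n = phi3_deg n (h n)"
  by (simp add: Phi3_def twist_def phi3_deg_def fun_ops rmul_x_def rmul_y_def rmul_u_def
      u_minus_1_def
      cscale_apply sigma_simps sigma_inv_simps sigma_ry_coeff sigma_inv_rx_coeff algebra_simps)

lemma twist_eq_iff: "twist V = twist W \<longleftrightarrow> V = W"
  by (metis untwist_twist)

definition fin_supp3 :: "gseq \<times> gseq \<times> gseq \<Rightarrow> bool" where
  "fin_supp3 = (\<lambda>(F, G, H). fin_supp F \<and> fin_supp G \<and> fin_supp H)"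

lemma finite_twist_supp:
  assumes "fin_supp3 V"
  shows "finite {n. twist V n \<noteq> (0, 0, 0)}"
proof -
  obtain F G H where V: "V = (F, G, H)" by (cases V)
  have "{n. twist V n \<noteq> (0, 0, 0)} \<subseteq> {n. F (n - 1) \<noteq> 0} \<union> {n. G (n + 1) \<noteq> 0} \<union> {n. H n \<noteq> 0}"
    by (auto simp: V twist_def)
  moreover have "finite ({n. F (n - 1) \<noteq> 0} \<union> {n. G (n + 1) \<noteq> 0} \<union> {n. H n \<noteq> 0})"
    using assms finite_int_shift[of "\<lambda>n. F n \<noteq> 0" "-1"] finite_int_shift[of "\<lambda>n. G n \<noteq> 0" 1]
    by (simp add: V fin_supp3_def fin_supp_def)
  ultimately show ?thesis
    by (rule finite_subset)
qed

lemma fin_supp3_untwist: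
  assumes "finite {n. D n \<noteq> (0, 0, 0)}"
  shows "fin_supp3 (untwist D)"
proof -
  have "finite {n. D (n + 1) \<noteq> (0, 0, 0)}" and "finite {n. D (n - 1) \<noteq> (0, 0, 0)}"
    using finite_int_shift[OF assms, of 1] finite_int_shift[OF assms, of "-1"] by simp_all
  moreover have "{n. fst (D (n + 1)) \<noteq> 0} \<subseteq> {n. D (n + 1) \<noteq> (0, 0, 0)}"
    and "{n. fst (snd (D (n - 1))) \<noteq> 0} \<subseteq> {n. D (n - 1) \<noteq> (0, 0, 0)}"
    and "{n. snd (snd (D n)) \<noteq> 0} \<subseteq> {n. D n \<noteq> (0, 0, 0)}"
    by auto
  ultimately show ?thesis
    using assms unfolding fin_supp3_def untwist_def fin_supp_def by (auto intro: finite_subset)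
qed

lemma Phi1_Phi2: "Phi1 (Phi2 V) = 0"
  by (simp add: fun_eq_iff fun_ops Phi1_apply twist_Phi2 phi1_deg_phi2_deg)

lemma Phi2_Phi3: "Phi2 (Phi3 h) = (0, 0, 0)"
  by (simp add: twist_Phi3 phi2_deg_phi3_deg twist_zero flip: twist_eq_iff)
    (simp add: fun_eq_iff twist_Phi2 twist_Phi3 phi2_deg_phi3_deg)

lemma Phi3_eq_0_iff: "Phi3 h = (0, 0, 0) \<longleftrightarrow> h = 0"
proof -
  have "Phi3 h = (0, 0, 0) \<longleftrightarrow> (\<forall>n. phi3_deg n (h n) = (0, 0, 0))"
    by (simp add: fun_eq_iff twist_zero twist_Phi3 flip: twist_eq_iff)
  then show ?thesis
    by (simp add: phi3_deg_eq_0_iff fun_eq_iff fun_ops)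
qed

lemma Phi1_exact:
  assumes "Phi1 V = 0" and "fin_supp3 V"
  shows "\<exists>W. fin_supp3 W \<and> Phi2 W = V"
proof -
  have "\<exists>x. phi2_deg n x = twist V n \<and> (twist V n = (0, 0, 0) \<longrightarrow> x = (0, 0, 0))" for n
  proof (cases "twist V n = (0, 0, 0)")
    case True
    then show ?thesis by (simp add: phi2_deg_def)
  next
    case False
    obtain \<alpha> \<beta> \<gamma> where t: "twist V n = (\<alpha>, \<beta>, \<gamma>)"
      by (cases "twist V n")
    have ker: "phi1_deg n (\<alpha>, \<beta>, \<gamma>) = 0"
      using fun_cong[OF assms(1), of n] by (simp add: Phi1_apply t fun_ops)
    obtain x where "phi2_deg n x = twist V n"
      using phi1_deg_exact[OF ker] t by metis
    then show ?thesis
      using False by blast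
  qed
  then obtain D where D: "\<And>n. phi2_deg n (D n) = twist V n"
    "\<And>n. twist V n = (0, 0, 0) \<Longrightarrow> D n = (0, 0, 0)"
    by metis
  have "finite {n. D n \<noteq> (0, 0, 0)}"
    using finite_twist_supp[OF assms(2)] by (rule rev_finite_subset) (auto simp: D(2))
  moreover have "Phi2 (untwist D) = V"
    by (simp add: fun_eq_iff twist_Phi2 D(1) flip: twist_eq_iff)
  ultimately show ?thesis
    using fin_supp3_untwist by blast
qed

lemma Phi2_exact:
  assumes "Phi2 V = (0, 0, 0)" and "fin_supp3 V"
  shows "\<exists>h. fin_supp h \<and> Phi3 h = V"
proof -
  have "\<exists>x. phi3_deg n x = twist V n \<and> (twist V n = (0, 0, 0) \<longrightarrow> x = 0)" for n
  proof (cases "twist V n = (0, 0, 0)")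
    case True
    then show ?thesis by (simp add: phi3_deg_def)
  next
    case False
    obtain \<alpha> \<beta> \<gamma> where t: "twist V n = (\<alpha>, \<beta>, \<gamma>)"
      by (cases "twist V n")
    have ker: "phi2_deg n (\<alpha>, \<beta>, \<gamma>) = (0, 0, 0)"
      using arg_cong[OF assms(1), of "\<lambda>V. twist V n"] by (simp add: twist_Phi2 twist_zero t)
    obtain x where "phi3_deg n x = twist V n"
      using phi2_deg_exact[OF ker] t by metis
    then show ?thesis
      using False by blast
  qed
  then obtain h where h: "\<And>n. phi3_deg n (h n) = twist V n" "\<And>n. twist V n = (0, 0, 0) \<Longrightarrow> h n = 0"
    by metis
  have "fin_supp h"
    unfolding fin_supp_def
    using finite_twist_supp[OF assms(2)] by (rule rev_finite_subset) (auto simp: h(2))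
  moreover have "Phi3 h = V"
    by (simp add: fun_eq_iff twist_Phi3 h(1) flip: twist_eq_iff)
  ultimately show ?thesis
    by blast
qed

end

context braided_sl2
begin

definition nf3 :: "freealg \<times> freealg \<times> freealg \<Rightarrow> gseq \<times> gseq \<times> gseq" where
  "nf3 = (\<lambda>(f, g, h). (nf f, nf g, nf h))"

lemmas nf_simps = nf_add nf_diff nf_uminus nf_mult_gx nf_mult_gy nf_mult_gu nf_mult_sc nf_sc_mult

lemma nf_phi1: "nf (phi1 v) = Phi1 (nf3 v)"
  by (cases v) (simp add: phi1_def Phi1_def nf3_def right_diff_distrib nf_simps)

lemma nf3_phi2: "nf3 (phi2 q v) = Phi2 (nf3 v)"
  by (cases v) (simp add: phi2_def Phi2_def nf3_def right_diff_distrib distrib_left nf_simps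
      flip: mult.assoc)

lemma nf3_phi3: "nf3 (phi3 q f) = Phi3 (nf f)"
  by (simp add: phi3_def Phi3_def nf3_def right_diff_distrib nf_simps flip: mult.assoc)

lemma nf3_zero [simp]: "nf3 (0, 0, 0) = (0, 0, 0)"
  by (simp add: nf3_def)

lemma beq3_iff_nf3_eq: "beq3 q v w \<longleftrightarrow> nf3 v = nf3 w"
  by (cases v; cases w) (simp add: beq3_def nf3_def beq_iff_nf_eq)

lemma fin_supp3_nf3: "fin_supp3 (nf3 v)"
  by (cases v) (simp add: fin_supp3_def nf3_def fin_supp_nf)

lemma nf3_surj: "fin_supp3 V \<Longrightarrow> \<exists>v. nf3 v = V"
  by (cases V) (auto simp: fin_supp3_def nf3_def dest!: nf_surj)

lemma beq_phi1_0_iff: "beq q (phi1 v) 0 \<longleftrightarrow> (\<exists>w. beq3 q v (phi2 q w))"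
proof
  assume "beq q (phi1 v) 0"
  then have "Phi1 (nf3 v) = 0"
    by (simp add: beq_iff_nf_eq nf_phi1)
  then obtain W where "fin_supp3 W" and "Phi2 W = nf3 v"
    using Phi1_exact fin_supp3_nf3 by blast
  moreover obtain w where "nf3 w = W"
    using nf3_surj \<open>fin_supp3 W\<close> by blast
  ultimately show "\<exists>w. beq3 q v (phi2 q w)"
    by (metis beq3_iff_nf3_eq nf3_phi2)
next
  assume "\<exists>w. beq3 q v (phi2 q w)"
  then show "beq q (phi1 v) 0"
    by (auto simp: beq3_iff_nf3_eq beq_iff_nf_eq nf_phi1 nf3_phi2 Phi1_Phi2)
qed

lemma beq3_phi2_0_iff: "beq3 q (phi2 q v) (0, 0, 0) \<longleftrightarrow> (\<exists>f. beq3 q v (phi3 q f))"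
proof
  assume "beq3 q (phi2 q v) (0, 0, 0)"
  then have "Phi2 (nf3 v) = (0, 0, 0)"
    by (simp add: beq3_iff_nf3_eq nf3_phi2)
  then obtain h where "fin_supp h" and "Phi3 h = nf3 v"
    using Phi2_exact fin_supp3_nf3 by blast
  moreover obtain f where "nf f = h"
    using nf_surj \<open>fin_supp h\<close> by blast
  ultimately show "\<exists>f. beq3 q v (phi3 q f)"
    by (metis beq3_iff_nf3_eq nf3_phi3)
next
  assume "\<exists>f. beq3 q v (phi3 q f)"
  then show "beq3 q (phi2 q v) (0, 0, 0)"
    by (auto simp: beq3_iff_nf3_eq nf3_phi2 nf3_phi3 Phi2_Phi3)
qed

lemma beq3_phi3_0_iff: "beq3 q (phi3 q f) (0, 0, 0) \<longleftrightarrow> beq q f 0"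
  by (simp add: beq3_iff_nf3_eq beq_iff_nf_eq nf3_phi3 Phi3_eq_0_iff)

end

theorem mainTheorem13:
  fixes q :: complex
  assumes "q \<noteq> 0"
    and "\<forall>n::nat. n > 0 \<longrightarrow> q ^ n \<noteq> 1"
  shows "(\<forall>a\<in>bsl_ideal q. eps a = 0)
    \<and> (\<forall>c. \<exists>f. eps f = c)
    \<and> (\<forall>f. eps f = 0 \<longleftrightarrow> (\<exists>v. beq q f (phi1 v)))
    \<and> (\<forall>v. beq q (phi1 v) 0 \<longleftrightarrow> (\<exists>w. beq3 q v (phi2 q w)))
    \<and> (\<forall>v. beq3 q (phi2 q v) (0, 0, 0) \<longleftrightarrow> (\<exists>f. beq3 q v (phi3 q f)))
    \<and> (\<forall>f. beq3 q (phi3 q f) (0, 0, 0) \<longleftrightarrow> beq q f 0)"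
proof -
  (* The root-of-unity hypothesis is only needed in the form q^4 \<noteq> 1, i.e. 1 + q^2 \<noteq> 0. *)
  have "1 + q^2 \<noteq> 0"
  proof
    assume "1 + q^2 = 0"
    then have "q ^ 4 = 1"
      by (metis add_eq_0_iff power2_minus power_mult numeral_times_numeral num_double power_one)
    then show False
      using assms(2) by auto
  qed
  then interpret braided_sl2 q
    using assms(1) by unfold_locales
  show ?thesis
    using eps_bsl_ideal eps_sc eps_eq_0_iff_beq_phi1 beq_phi1_0_iff beq3_phi2_0_iff beq3_phi3_0_iff
    by blast
qed

end
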